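(* Consider a radial three-phase distribution grid on buses $\{0,\ldots,N\}$ (feeder bus $0$, each bus $n\geq1$ with parent $\pi_n<n$, line $n$ joining $\pi_n$ and $n$), with symmetric phase impedance matrices $\mathbf{Z}_n=\mathbf{Z}_n^{\top}\in\mathbb{C}^{3\times3}$ having entries $z_n^{ij}=r_n^{ij}+jx_n^{ij}$. Let $\mathbf{X}:=2\mathbf{M}\,\mathrm{bdiag}(\{\mathrm{Im}[\tilde{\mathbf{Z}}_n]\})\mathbf{M}^{\top}$ and $\mathbf{R}:=2\mathbf{M}\,\mathrm{bdiag}(\{\mathrm{Re}[\tilde{\mathbf{Z}}_n]\})\mathbf{M}^{\top}$, and let $\mathbf{X}_x:=2\mathbf{M}\,\mathrm{bdiag}(\{\tilde{\mathbf{X}}_n\})\mathbf{M}^{\top}$, where \[\tilde{\mathbf{X}}_n:=\frac12\begin{bmatrix}2x_n^{11}&-x_n^{12}&-x_n^{13}\\-x_n^{12}&2x_n^{22}&-x_n^{23}\\-x_n^{13}&-x_n^{23}&2x_n^{33}\end{bmatrix}.\] Fix $\mathbf{p}\in\mathbb{R}^{3N}$ and $v_0$, and let $\mathbf{v}(\mathbf{q}):=\mathbf{R}\mathbf{p}+\mathbf{X}\mathbf{q}+v_0\mathbf{1}_{3N}$. Starting from any $\mathbf{q}^0\in\mathbb{R}^{3N}$, consider $\mathbf{q}^{t+1}=\mathbf{q}^t-\mu(\mathbf{v}^t-v_0\mathbf{1}_{3N})$ with $\mathbf{v}^t:=\mathbf{v}(\mathbf{q}^t)$. If $\mu\in\left(0,\frac{2\lambda_{\min}(\mathbf{X}_x)}{\lambda_{\max}(\mathbf{X}^{\top}\mathbf{X})}\right)$,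 then $\mathbf{q}^t$ converges to the minimizer of $\min_{\mathbf{q}\in\mathbb{R}^{3N}}\tfrac12\|\mathbf{R}\mathbf{p}+\mathbf{X}\mathbf{q}\|_2^2$.
   Context: $\tilde{\mathbf{Z}}_n:=\operatorname{diag}(\boldsymbol{\alpha}^* )\mathbf{Z}_n\operatorname{diag}(\boldsymbol{\alpha})$ with $\boldsymbol{\alpha}:=[1~\alpha~\alpha^2]^{\top}$, $\alpha=e^{-j2\pi/3}$; $^*$ is entrywise conjugation, $\mathrm{Re},\mathrm{Im}$ are entrywise. $\mathbf{M}:=\mathbf{T}(\mathbf{I}_3\otimes\mathbf{F})\mathbf{T}^{\top}$, where: the full branch-bus incidence matrix $\tilde{\mathbf{A}}=[\mathbf{a}_0~\mathbf{A}]\in\mathbb{R}^{N\times(N+1)}$ has in row $n$ entry $+1$ at column $\pi_n$, $-1$ at column $n$, zeros elsewhere; $\mathbf{A}$ is the reduced incidence matrix (column of bus $0$ removed); $\mathbf{F}:=-\mathbf{A}^{-1}$; $\mathbf{T}:=[\mathbf{I}_3\otimes\mathbf{e}_1^{\top};\ldots;\mathbf{I}_3\otimes\mathbf{e}_N^{\top}]\in\mathbb{R}^{3N\times3N}$ (blocks stacked vertically) with $\mathbf{e}_n$ the $n$-th column of $\mathbf{I}_N$. $\mathrm{bdiag}(\{\mathbf{Y}_n\})$ is block diagonal with blocks $\mathbf{Y}_1,\ldots,\mathbf{Y}_N$. $\lambda_{\min},\lambda_{\max}$ denote smallest/largest eigenvalues of symmetric matrices. *)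

theory Defs
  imports "Jordan_Normal_Form.Gauss_Jordan_Elimination" "Jordan_Normal_Form.Char_Poly"
begin

definition kron :: "'a::times mat \<Rightarrow> 'a mat \<Rightarrow> 'a mat" where
  "kron A B = mat (dim_row A * dim_row B) (dim_col A * dim_col B)
     (\<lambda>(r,c). A $$ (r div dim_row B, c div dim_col B) * B $$ (r mod dim_row B, c mod dim_col B))"

(* full branch-bus incidence matrix, N x (N+1); row n-1 <-> line n, column b <-> bus b *)
definition inc_full :: "nat \<Rightarrow> (nat \<Rightarrow> nat) \<Rightarrow> real mat" where
  "inc_full N par = mat N (N+1) (\<lambda>(r,c). if c = par (r+1) then 1 else if c = r+1 then -1 else 0)"

definition inc_red :: "nat \<Rightarrow> (nat \<Rightarrow> nat) \<Rightarrow> real mat" where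
  "inc_red N par = mat N N (\<lambda>(r,c). inc_full N par $$ (r, c+1))"

definition Fmat :: "nat \<Rightarrow> (nat \<Rightarrow> nat) \<Rightarrow> real mat" where
  "Fmat N par = - the (mat_inverse (inc_red N par))"

(* T = [I3 (x) e_1^T; ...; I3 (x) e_N^T] *)
definition Tmat :: "nat \<Rightarrow> real mat" where
  "Tmat N = mat (3*N) (3*N)
     (\<lambda>(r,c). (kron (1\<^sub>m 3) (mat_of_row (unit_vec N (r div 3)))) $$ (r mod 3, c))"

definition Mmat :: "nat \<Rightarrow> (nat \<Rightarrow> nat) \<Rightarrow> real mat" where
  "Mmat N par = Tmat N * kron (1\<^sub>m 3) (Fmat N par) * transpose_mat (Tmat N)"

definition bdiag :: "nat \<Rightarrow> (nat \<Rightarrow> real mat) \<Rightarrow> real mat" where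
  "bdiag N Y = mat (3*N) (3*N)
     (\<lambda>(r,c). if r div 3 = c div 3 then Y (r div 3 + 1) $$ (r mod 3, c mod 3) else 0)"

definition alpha :: complex where
  "alpha = cis (- 2 * pi / 3)"

definition Ztilde :: "complex mat \<Rightarrow> complex mat" where
  "Ztilde Z = mat_diag 3 (\<lambda>i. cnj (alpha ^ i)) * Z * mat_diag 3 (\<lambda>i. alpha ^ i)"

definition Xtilde :: "complex mat \<Rightarrow> real mat" where
  "Xtilde Z = mat 3 3 (\<lambda>(i,j). if i = j then Im (Z $$ (i,i)) else - Im (Z $$ (i,j)) / 2)"

definition lambda_min :: "real mat \<Rightarrow> real" where
  "lambda_min A = Min {k. eigenvalue A k}"

definition lambda_max :: "real mat \<Rightarrow> real" where
  "lambda_max A = Max {k. eigenvalue A k}"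

end

theory Submission
  imports Defs
begin

text \<open>
  For symmetric \<open>Z\<^sub>n\<close>, the symmetric part of \<open>Im (Ztilde Z\<^sub>n)\<close> is \<open>Xtilde Z\<^sub>n\<close>: off the
  diagonal the phase factors \<open>cnj (\<alpha>\<^sup>i) \<alpha>\<^sup>j\<close> are conjugate cube roots of unity with real part
  \<open>-1/2\<close>. This relation survives the congruence with \<open>M\<close>, so \<open>X\<close> has the quadratic form of
  \<open>X\<^sub>x\<close>, whence \<open>q\<^sup>T X q \<ge> \<lambda>\<^sub>m\<^sub>i\<^sub>n(X\<^sub>x) |q|\<^sup>2\<close>, while \<open>|X q|\<^sup>2 \<le> \<lambda>\<^sub>m\<^sub>a\<^sub>x(X\<^sup>T X) |q|\<^sup>2\<close>. Hence \<open>X\<close> is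
  invertible, \<open>q\<^sup>* = - X\<^sup>-\<^sup>1 R p\<close> has zero residual and is the unique minimiser, and the error
  \<open>e = q - q\<^sup>*\<close> follows \<open>e \<mapsto> e - \<mu> X e\<close>, which multiplies \<open>|e|\<^sup>2\<close> by at most
  \<open>1 - 2\<mu>\<lambda>\<^sub>m\<^sub>i\<^sub>n + \<mu>\<^sup>2\<lambda>\<^sub>m\<^sub>a\<^sub>x < 1\<close>.

  The Rayleigh bounds need no spectral theorem. If \<open>c\<close> is the infimum of the Rayleigh
  quotients of a symmetric \<open>A\<close>, then \<open>B = A - c I\<close> is positive semidefinite, yet \<open>x\<^sup>T B x\<close> is
  not bounded below by any positive multiple of \<open>|x|\<^sup>2\<close>. Cauchy-Schwarz for the semidefinite
  form gives \<open>|B x|\<^sup>2 \<le> K x\<^sup>T B x\<close>, so \<open>B\<close> cannot satisfy \<open>|x|\<^sup>2 \<le> L |B x|\<^sup>2\<close> as an invertible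
  matrix would: \<open>B\<close> is singular and \<open>c\<close> is an eigenvalue.
\<close>

section \<open>Quadratic forms of real matrices\<close>

lemma scalar_prod_self_nonneg: "0 \<le> (v :: real vec) \<bullet> v"
  using conjugate_square_ge_0_vec[of v] by simp

lemma scalar_prod_self_pos: "(v :: real vec) \<in> carrier_vec n \<Longrightarrow> v \<noteq> 0\<^sub>v n \<Longrightarrow> 0 < v \<bullet> v"
  using conjugate_square_greater_0_vec[of v n] by simp

lemma vec_index_sq_le_scalar_prod_self:
  fixes v :: "real vec"
  assumes "v \<in> carrier_vec n" and "i < n"
  shows "(v $ i)\<^sup>2 \<le> v \<bullet> v"
proof -
  have "(v $ i)\<^sup>2 \<le> (\<Sum>k\<in>{0..<n}. (v $ k)\<^sup>2)"
    using assms(2) by (intro member_le_sum) auto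
  also have "\<dots> = v \<bullet> v"
    using assms(1) by (simp add: scalar_prod_def power2_eq_square)
  finally show ?thesis .
qed

lemma sqnorm_minus_smult:
  fixes x y :: "real vec"
  assumes "x \<in> carrier_vec n" and "y \<in> carrier_vec n"
  shows "(x - c \<cdot>\<^sub>v y) \<bullet> (x - c \<cdot>\<^sub>v y) = x \<bullet> x - 2 * c * (x \<bullet> y) + c\<^sup>2 * (y \<bullet> y)"
  using assms by (simp add: minus_scalar_prod_distrib[of _ n] scalar_prod_minus_distrib[of _ n]
      comm_scalar_prod[of y n x] power2_eq_square algebra_simps)

lemma smult_mat_mult_mat_vec:
  "A \<in> carrier_mat nr nc \<Longrightarrow> v \<in> carrier_vec nc \<Longrightarrow> (k \<cdot>\<^sub>m A) *\<^sub>v v = k \<cdot>\<^sub>v (A *\<^sub>v v)"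
  for A :: "'a :: comm_ring mat"
  by (intro eq_vecI) (auto simp: scalar_prod_def sum_distrib_left ac_simps)

lemma transpose_smult_mat: "transpose_mat (k \<cdot>\<^sub>m A) = k \<cdot>\<^sub>m transpose_mat A"
  by (intro eq_matI) auto

lemma quadratic_form_expand:
  fixes A :: "'a :: comm_semiring_0 mat"
  assumes A: "A \<in> carrier_mat n n" and x: "x \<in> carrier_vec n" and y: "y \<in> carrier_vec n"
  shows "x \<bullet> (A *\<^sub>v y) = (\<Sum>i<n. \<Sum>j<n. A $$ (i,j) * x $ i * y $ j)"
  using assms by (auto simp: scalar_prod_def lessThan_atLeast0 sum_distrib_left ac_simps
      intro!: sum.cong)

lemma quadratic_form_bounded:
  fixes A :: "real mat"
  assumes A: "A \<in> carrier_mat n n"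
  obtains K where "0 \<le> K" and "\<And>x. x \<in> carrier_vec n \<Longrightarrow> \<bar>x \<bullet> (A *\<^sub>v x)\<bar> \<le> K * (x \<bullet> x)"
proof
  define K where "K = (\<Sum>i<n. \<Sum>j<n. \<bar>A $$ (i,j)\<bar>)"
  show "0 \<le> K" unfolding K_def by (intro sum_nonneg) auto
  fix x :: "real vec" assume x: "x \<in> carrier_vec n"
  have entry: "\<bar>x $ i * x $ j\<bar> \<le> x \<bullet> x" if "i < n" "j < n" for i j
  proof -
    have "\<bar>x $ i * x $ j\<bar> \<le> ((x $ i)\<^sup>2 + (x $ j)\<^sup>2) / 2"
      using sum_squares_bound[of "\<bar>x $ i\<bar>" "\<bar>x $ j\<bar>"] by (simp add: abs_mult)
    also have "\<dots> \<le> x \<bullet> x"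
      using vec_index_sq_le_scalar_prod_self[OF x that(1)] vec_index_sq_le_scalar_prod_self[OF x that(2)]
      by (simp add: field_simps)
    finally show ?thesis .
  qed
  have "\<bar>x \<bullet> (A *\<^sub>v x)\<bar> \<le> (\<Sum>i<n. \<Sum>j<n. \<bar>A $$ (i,j) * x $ i * x $ j\<bar>)"
    unfolding quadratic_form_expand[OF A x x]
    by (rule order_trans[OF sum_abs]) (intro sum_mono sum_abs)
  also have "\<dots> \<le> (\<Sum>i<n. \<Sum>j<n. \<bar>A $$ (i,j)\<bar> * (x \<bullet> x))"
    by (intro sum_mono) (auto simp: abs_mult mult.assoc intro!: mult_left_mono entry[unfolded abs_mult])
  finally show "\<bar>x \<bullet> (A *\<^sub>v x)\<bar> \<le> K * (x \<bullet> x)"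
    unfolding K_def by (simp add: sum_distrib_right)
qed

lemma symmetric_mat_scalar_prod_swap:
  fixes A :: "'a :: comm_semiring_0 mat"
  assumes A: "A \<in> carrier_mat n n" and sym: "transpose_mat A = A"
    and x: "x \<in> carrier_vec n" and y: "y \<in> carrier_vec n"
  shows "x \<bullet> (A *\<^sub>v y) = y \<bullet> (A *\<^sub>v x)"
  using transpose_vec_mult_scalar[OF A y x] comm_scalar_prod[of "A *\<^sub>v x" n y] A x y
  by (simp add: sym)

lemma symmetric_quadratic_form_add_smult:
  fixes A :: "real mat"
  assumes A: "A \<in> carrier_mat n n" and sym: "transpose_mat A = A"
    and x: "x \<in> carrier_vec n" and y: "y \<in> carrier_vec n"
  shows "(x + t \<cdot>\<^sub>v y) \<bullet> (A *\<^sub>v (x + t \<cdot>\<^sub>v y))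
       = x \<bullet> (A *\<^sub>v x) + 2 * t * (y \<bullet> (A *\<^sub>v x)) + t\<^sup>2 * (y \<bullet> (A *\<^sub>v y))"
  using A x y symmetric_mat_scalar_prod_swap[OF A sym x y]
  by (simp add: mult_add_distrib_mat_vec[OF A] mult_mat_vec[OF A] add_scalar_prod_distrib[of _ n]
      scalar_prod_add_distrib[of _ n] power2_eq_square algebra_simps)

section \<open>Rayleigh bounds for the extreme eigenvalues\<close>

lemma nonneg_quadratic_discriminant:
  fixes a b c :: real
  assumes nonneg: "\<And>t. 0 \<le> c + 2 * t * b + t\<^sup>2 * a" and "0 \<le> a"
  shows "b\<^sup>2 \<le> a * c"
proof (cases "a = 0")
  case True
  have "b = 0"
  proof (rule ccontr)
    assume "b \<noteq> 0"
    then show False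
      using nonneg[of "- (c + 1) / (2 * b)"] True by (simp add: field_simps)
  qed
  then show ?thesis using True nonneg[of 0] by simp
next
  case False
  with \<open>0 \<le> a\<close> have "0 < a" by simp
  have "0 \<le> c + 2 * (- b / a) * b + (- b / a)\<^sup>2 * a" by (rule nonneg)
  also have "\<dots> = (a * c - b\<^sup>2) / a" using \<open>0 < a\<close> by (simp add: field_simps power2_eq_square)
  finally show ?thesis using \<open>0 < a\<close> by (simp add: zero_le_divide_iff)
qed

lemma psd_cauchy_schwarz:
  fixes A :: "real mat"
  assumes A: "A \<in> carrier_mat n n" and sym: "transpose_mat A = A"
    and psd: "\<And>z. z \<in> carrier_vec n \<Longrightarrow> 0 \<le> z \<bullet> (A *\<^sub>v z)"
    and x: "x \<in> carrier_vec n" and y: "y \<in> carrier_vec n"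
  shows "(y \<bullet> (A *\<^sub>v x))\<^sup>2 \<le> (y \<bullet> (A *\<^sub>v y)) * (x \<bullet> (A *\<^sub>v x))"
proof (rule nonneg_quadratic_discriminant)
  fix t
  show "0 \<le> x \<bullet> (A *\<^sub>v x) + 2 * t * (y \<bullet> (A *\<^sub>v x)) + t\<^sup>2 * (y \<bullet> (A *\<^sub>v y))"
    using psd[of "x + t \<cdot>\<^sub>v y"] symmetric_quadratic_form_add_smult[OF A sym x y] x y by simp
qed (rule psd[OF y])

lemma psd_image_sqnorm_bounded:
  fixes A :: "real mat"
  assumes A: "A \<in> carrier_mat n n" and sym: "transpose_mat A = A"
    and psd: "\<And>z. z \<in> carrier_vec n \<Longrightarrow> 0 \<le> z \<bullet> (A *\<^sub>v z)"
  obtains K where "0 \<le> K" and "\<And>x. x \<in> carrier_vec n \<Longrightarrow> (A *\<^sub>v x) \<bullet> (A *\<^sub>v x) \<le> K * (x \<bullet> (A *\<^sub>v x))"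
proof -
  obtain K where K: "0 \<le> K" "\<And>x. x \<in> carrier_vec n \<Longrightarrow> \<bar>x \<bullet> (A *\<^sub>v x)\<bar> \<le> K * (x \<bullet> x)"
    using quadratic_form_bounded[OF A] by blast
  have "(A *\<^sub>v x) \<bullet> (A *\<^sub>v x) \<le> K * (x \<bullet> (A *\<^sub>v x))" if x: "x \<in> carrier_vec n" for x
  proof -
    define y where "y = A *\<^sub>v x"
    have y: "y \<in> carrier_vec n" unfolding y_def using A x by simp
    have "(y \<bullet> y) * (y \<bullet> y) = (y \<bullet> (A *\<^sub>v x))\<^sup>2" by (simp add: y_def power2_eq_square)
    also have "\<dots> \<le> (y \<bullet> (A *\<^sub>v y)) * (x \<bullet> (A *\<^sub>v x))"
      by (rule psd_cauchy_schwarz[OF A sym psd x y])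
    also have "\<dots> \<le> (K * (y \<bullet> y)) * (x \<bullet> (A *\<^sub>v x))"
      using K(2)[OF y] psd[OF y] psd[OF x] by (intro mult_right_mono) auto
    finally have "(y \<bullet> y) * (y \<bullet> y) \<le> (y \<bullet> y) * (K * (x \<bullet> (A *\<^sub>v x)))"
      by (simp add: algebra_simps)
    then show ?thesis
      using scalar_prod_self_nonneg[of y] K(1) psd[OF x] unfolding y_def[symmetric]
      by (cases "y \<bullet> y = 0") auto
  qed
  with K(1) show ?thesis using that by blast
qed

lemma nonsingular_mat_inverse:
  fixes A :: "'a :: field mat"
  assumes A: "A \<in> carrier_mat n n" and "det A \<noteq> 0"
  obtains B where "B \<in> carrier_mat n n" and "A * B = 1\<^sub>m n" and "B * A = 1\<^sub>m n"
proof -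
  have "A \<in> Units (ring_mat TYPE('a) n ())" by (rule det_non_zero_imp_unit[OF A \<open>det A \<noteq> 0\<close>])
  then obtain B where "mat_inverse A = Some B" using mat_inverse(1)[OF A] by fastforce
  then show ?thesis using mat_inverse(2)[OF A] that by blast
qed

lemma nonsingular_mat_coercive:
  fixes A :: "real mat"
  assumes A: "A \<in> carrier_mat n n" and "det A \<noteq> 0"
  obtains L where "0 \<le> L" and "\<And>x. x \<in> carrier_vec n \<Longrightarrow> x \<bullet> x \<le> L * ((A *\<^sub>v x) \<bullet> (A *\<^sub>v x))"
proof -
  obtain B where B: "B \<in> carrier_mat n n" "B * A = 1\<^sub>m n"
    using nonsingular_mat_inverse[OF assms] by metis
  have G: "transpose_mat B * B \<in> carrier_mat n n" using B by simp
  obtain L where L: "0 \<le> L" "\<And>y. y \<in> carrier_vec n \<Longrightarrow> \<bar>y \<bullet> ((transpose_mat B * B) *\<^sub>v y)\<bar> \<le> L * (y \<bullet> y)"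
    using quadratic_form_bounded[OF G] by blast
  have "x \<bullet> x \<le> L * ((A *\<^sub>v x) \<bullet> (A *\<^sub>v x))" if x: "x \<in> carrier_vec n" for x
  proof -
    define y where "y = A *\<^sub>v x"
    have y: "y \<in> carrier_vec n" unfolding y_def using A x by simp
    have "x = B *\<^sub>v y"
      unfolding y_def using A B x by (simp flip: assoc_mult_mat_vec)
    then have "x \<bullet> x = (B *\<^sub>v y) \<bullet> (B *\<^sub>v y)" by simp
    also have "\<dots> = y \<bullet> ((transpose_mat B * B) *\<^sub>v y)"
      using transpose_vec_mult_scalar[of B n n y "B *\<^sub>v y"] B y
      by (simp add: comm_scalar_prod[of _ n])
    also have "\<dots> \<le> L * (y \<bullet> y)" using L(2)[OF y] by simp
    finally show ?thesis unfolding y_def .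
  qed
  with L(1) show ?thesis using that by blast
qed

lemma psd_mat_singular:
  fixes A :: "real mat"
  assumes A: "A \<in> carrier_mat n n" and sym: "transpose_mat A = A"
    and psd: "\<And>z. z \<in> carrier_vec n \<Longrightarrow> 0 \<le> z \<bullet> (A *\<^sub>v z)"
    and small: "\<And>\<epsilon>. 0 < \<epsilon> \<Longrightarrow> \<exists>x\<in>carrier_vec n. x \<noteq> 0\<^sub>v n \<and> x \<bullet> (A *\<^sub>v x) < \<epsilon> * (x \<bullet> x)"
  shows "det A = 0"
proof (rule ccontr)
  assume "det A \<noteq> 0"
  obtain K where K: "0 \<le> K" "\<And>x. x \<in> carrier_vec n \<Longrightarrow> (A *\<^sub>v x) \<bullet> (A *\<^sub>v x) \<le> K * (x \<bullet> (A *\<^sub>v x))"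
    using psd_image_sqnorm_bounded[OF A sym psd] by blast
  obtain L where L: "0 \<le> L" "\<And>x. x \<in> carrier_vec n \<Longrightarrow> x \<bullet> x \<le> L * ((A *\<^sub>v x) \<bullet> (A *\<^sub>v x))"
    using nonsingular_mat_coercive[OF A \<open>det A \<noteq> 0\<close>] by blast
  define \<epsilon> where "\<epsilon> = 1 / (L * K + 1)"
  have LK: "0 \<le> L * K" using K(1) L(1) by simp
  then have "0 < \<epsilon>" and LK\<epsilon>: "L * K * \<epsilon> < 1" unfolding \<epsilon>_def by (simp_all add: field_simps)
  then obtain x where x: "x \<in> carrier_vec n" "x \<noteq> 0\<^sub>v n" and x\<epsilon>: "x \<bullet> (A *\<^sub>v x) < \<epsilon> * (x \<bullet> x)"
    using small by blast
  have "x \<bullet> x \<le> L * (K * (x \<bullet> (A *\<^sub>v x)))"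
    using L(2)[OF x(1)] mult_left_mono[OF K(2)[OF x(1)] L(1)] by linarith
  also have "\<dots> \<le> L * K * (\<epsilon> * (x \<bullet> x))"
    using mult_left_mono[OF less_imp_le[OF x\<epsilon>] LK] by (simp add: mult.assoc)
  also have "\<dots> < x \<bullet> x"
    using LK\<epsilon> scalar_prod_self_pos[OF x] by (simp add: mult.assoc[symmetric])
  finally show False by simp
qed

lemma char_matrix_quadratic_form:
  fixes A :: "real mat"
  assumes A: "A \<in> carrier_mat n n" and x: "x \<in> carrier_vec n"
  shows "x \<bullet> (char_matrix A c *\<^sub>v x) = x \<bullet> (A *\<^sub>v x) - c * (x \<bullet> x)"
  unfolding char_matrix_def using A x
  by (simp add: add_mult_distrib_mat_vec[of _ n n] smult_mat_mult_mat_vec[of _ n n]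
      scalar_prod_add_distrib[of _ n])

definition rayleigh_quotients :: "real mat \<Rightarrow> nat \<Rightarrow> real set" where
  "rayleigh_quotients A n = {(x \<bullet> (A *\<^sub>v x)) / (x \<bullet> x) | x. x \<in> carrier_vec n \<and> x \<noteq> 0\<^sub>v n}"

lemma rayleigh_quotients_nonempty: "0 < n \<Longrightarrow> rayleigh_quotients A n \<noteq> {}"
proof -
  assume "0 < n"
  then have "unit_vec n 0 \<noteq> (0\<^sub>v n :: real vec)"
    by (metis index_unit_vec(1) index_zero_vec(1) zero_neq_one)
  then show ?thesis unfolding rayleigh_quotients_def using unit_vec_carrier by blast
qed

lemma rayleigh_quotients_bdd_below:
  fixes A :: "real mat"
  assumes A: "A \<in> carrier_mat n n"
  shows "bdd_below (rayleigh_quotients A n)"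
proof -
  obtain K where K: "\<And>x. x \<in> carrier_vec n \<Longrightarrow> \<bar>x \<bullet> (A *\<^sub>v x)\<bar> \<le> K * (x \<bullet> x)"
    using quadratic_form_bounded[OF A] by blast
  show ?thesis
  proof (rule bdd_belowI)
    fix r assume "r \<in> rayleigh_quotients A n"
    then obtain x where x: "x \<in> carrier_vec n" "x \<noteq> 0\<^sub>v n" and r: "r = (x \<bullet> (A *\<^sub>v x)) / (x \<bullet> x)"
      unfolding rayleigh_quotients_def by blast
    show "- K \<le> r"
      using K[OF x(1)] scalar_prod_self_pos[OF x] unfolding r by (simp add: field_simps)
  qed
qed

lemma symmetric_mat_least_eigenvalue_rayleigh:
  fixes A :: "real mat"
  assumes A: "A \<in> carrier_mat n n" and sym: "transpose_mat A = A" and "0 < n"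
  obtains c where "eigenvalue A c" and "\<And>x. x \<in> carrier_vec n \<Longrightarrow> c * (x \<bullet> x) \<le> x \<bullet> (A *\<^sub>v x)"
proof -
  define c where "c = Inf (rayleigh_quotients A n)"
  have lower: "c * (x \<bullet> x) \<le> x \<bullet> (A *\<^sub>v x)" if x: "x \<in> carrier_vec n" for x
  proof (cases "x = 0\<^sub>v n")
    case False
    have "c \<le> (x \<bullet> (A *\<^sub>v x)) / (x \<bullet> x)"
      unfolding c_def using x False rayleigh_quotients_bdd_below[OF A]
      by (intro cInf_lower) (auto simp: rayleigh_quotients_def)
    then show ?thesis using scalar_prod_self_pos[OF x False] by (simp add: field_simps)
  qed (use A in simp)
  define B where "B = char_matrix A c"
  have B: "B \<in> carrier_mat n n" unfolding B_def using A by simp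
  have B_sym: "transpose_mat B = B"
    unfolding B_def char_matrix_def using A sym by (simp add: transpose_add transpose_smult_mat)
  have B_form: "x \<bullet> (B *\<^sub>v x) = x \<bullet> (A *\<^sub>v x) - c * (x \<bullet> x)" if "x \<in> carrier_vec n" for x
    unfolding B_def by (rule char_matrix_quadratic_form[OF A that])
  have "det B = 0"
  proof (rule psd_mat_singular[OF B B_sym])
    show "0 \<le> x \<bullet> (B *\<^sub>v x)" if "x \<in> carrier_vec n" for x
      using lower[OF that] B_form[OF that] by simp
    fix \<epsilon> :: real assume "0 < \<epsilon>"
    then obtain r where "r \<in> rayleigh_quotients A n" "r < c + \<epsilon>"
      using cInf_lessD[OF rayleigh_quotients_nonempty[OF \<open>0 < n\<close>, where A = A], of "c + \<epsilon>"] unfolding c_def by auto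
    then obtain x where x: "x \<in> carrier_vec n" "x \<noteq> 0\<^sub>v n" and "(x \<bullet> (A *\<^sub>v x)) / (x \<bullet> x) < c + \<epsilon>"
      unfolding rayleigh_quotients_def by blast
    then have "x \<bullet> (B *\<^sub>v x) < \<epsilon> * (x \<bullet> x)"
      using B_form[OF x(1)] scalar_prod_self_pos[OF x] by (simp add: field_simps)
    with x show "\<exists>x\<in>carrier_vec n. x \<noteq> 0\<^sub>v n \<and> x \<bullet> (B *\<^sub>v x) < \<epsilon> * (x \<bullet> x)" by blast
  qed
  then have "eigenvalue A c" unfolding B_def using eigenvalue_det[OF A] by simp
  with lower show ?thesis using that by blast
qed

lemma finite_eigenvalues:
  fixes A :: "'a :: field mat"
  assumes A: "A \<in> carrier_mat n n"
  shows "finite {k. eigenvalue A k}"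
proof -
  have "char_poly A \<noteq> 0" using degree_monic_char_poly[OF A] by auto
  then show ?thesis using poly_roots_finite eigenvalue_root_char_poly[OF A] by simp
qed

lemma eigenvalue_uminus_mat:
  fixes A :: "'a :: field mat"
  assumes A: "A \<in> carrier_mat n n" and "eigenvalue (- A) c"
  shows "eigenvalue A (- c)"
proof -
  have "char_matrix (- A) c = - char_matrix A (- c)"
    unfolding char_matrix_def using A by (intro eq_matI) auto
  then show ?thesis
    using assms eigenvalue_det[OF A] eigenvalue_det[of "- A" n] det_0_negate[of "char_matrix A (- c)" n]
    by simp
qed

lemma lambda_min_rayleigh:
  fixes A :: "real mat"
  assumes A: "A \<in> carrier_mat n n" and sym: "transpose_mat A = A" and x: "x \<in> carrier_vec n"
  shows "lambda_min A * (x \<bullet> x) \<le> x \<bullet> (A *\<^sub>v x)"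
proof (cases "n = 0")
  case False
  then obtain c where c: "eigenvalue A c" "c * (x \<bullet> x) \<le> x \<bullet> (A *\<^sub>v x)"
    using symmetric_mat_least_eigenvalue_rayleigh[OF A sym] x by (metis gr0I)
  have "lambda_min A \<le> c"
    unfolding lambda_min_def using finite_eigenvalues[OF A] c(1) by (intro Min_le) auto
  then show ?thesis using c(2) mult_right_mono[OF _ scalar_prod_self_nonneg[of x]] by (meson order_trans)
qed (use A x in \<open>simp add: scalar_prod_def\<close>)

lemma rayleigh_lambda_max:
  fixes A :: "real mat"
  assumes A: "A \<in> carrier_mat n n" and sym: "transpose_mat A = A" and x: "x \<in> carrier_vec n"
  shows "x \<bullet> (A *\<^sub>v x) \<le> lambda_max A * (x \<bullet> x)"
proof (cases "n = 0")
  case False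
  have "- A \<in> carrier_mat n n" and "transpose_mat (- A) = - A" using A sym by (simp_all add: transpose_uminus)
  then obtain c where c: "eigenvalue (- A) c" "c * (x \<bullet> x) \<le> x \<bullet> (- A *\<^sub>v x)"
    using symmetric_mat_least_eigenvalue_rayleigh[of "- A" n] x False by (metis gr0I)
  have "- c \<le> lambda_max A"
    unfolding lambda_max_def using finite_eigenvalues[OF A] eigenvalue_uminus_mat[OF A c(1)]
    by (intro Max_ge) auto
  have "x \<bullet> (A *\<^sub>v x) \<le> - c * (x \<bullet> x)" using c(2) A x by simp
  also have "\<dots> \<le> lambda_max A * (x \<bullet> x)"
    by (rule mult_right_mono[OF \<open>- c \<le> lambda_max A\<close> scalar_prod_self_nonneg])
  finally show ?thesis .
qed (use A x in \<open>simp add: scalar_prod_def\<close>)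

lemma gram_rayleigh_lambda_max:
  fixes A :: "real mat"
  assumes A: "A \<in> carrier_mat n n" and x: "x \<in> carrier_vec n"
  shows "(A *\<^sub>v x) \<bullet> (A *\<^sub>v x) \<le> lambda_max (transpose_mat A * A) * (x \<bullet> x)"
proof -
  have G: "transpose_mat A * A \<in> carrier_mat n n" using A by simp
  have "transpose_mat (transpose_mat A * A) = transpose_mat A * A"
    using transpose_mult[of "transpose_mat A" n n A n] A by simp
  moreover have "(A *\<^sub>v x) \<bullet> (A *\<^sub>v x) = x \<bullet> ((transpose_mat A * A) *\<^sub>v x)"
    using transpose_vec_mult_scalar[of A n n x "A *\<^sub>v x"] A x by (simp add: comm_scalar_prod[of _ n])
  ultimately show ?thesis using rayleigh_lambda_max[OF G _ x] by simp
qed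

lemma lambda_max_gram_nonneg:
  fixes A :: "real mat"
  assumes A: "A \<in> carrier_mat n n" and "0 < n"
  shows "0 \<le> lambda_max (transpose_mat A * A)"
proof -
  let ?e = "unit_vec n 0 :: real vec"
  have e: "?e \<in> carrier_vec n" by simp
  have "?e \<bullet> ?e = 1" using \<open>0 < n\<close> scalar_prod_left_unit[OF e \<open>0 < n\<close>] by simp
  then show ?thesis
    using gram_rayleigh_lambda_max[OF A e] scalar_prod_self_nonneg[of "A *\<^sub>v ?e"] by simp
qed

section \<open>The symmetric part of a matrix\<close>

lemma symmetric_part_carrier:
  assumes "A \<in> carrier_mat n n" and "A + transpose_mat A = 2 \<cdot>\<^sub>m S"
  shows "S \<in> carrier_mat n n"
  using arg_cong[OF assms(2), of dim_row] arg_cong[OF assms(2), of dim_col] assms(1) by auto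

lemma symmetric_part_transpose:
  fixes A S :: "real mat"
  assumes A: "A \<in> carrier_mat n n" and part: "A + transpose_mat A = 2 \<cdot>\<^sub>m S"
  shows "transpose_mat S = S"
proof -
  have S: "S \<in> carrier_mat n n" by (rule symmetric_part_carrier[OF A part])
  have entry: "2 * S $$ (i, j) = A $$ (i, j) + A $$ (j, i)" if "i < n" "j < n" for i j
    using arg_cong[OF part, of "\<lambda>B. B $$ (i, j)"] A S that by simp
  have "S $$ (j, i) = S $$ (i, j)" if "i < n" "j < n" for i j
    using entry[OF that] entry[of j i] that by simp
  then show ?thesis using S by (intro eq_matI) auto
qed

lemma quadratic_form_symmetric_part:
  fixes A S :: "real mat"
  assumes A: "A \<in> carrier_mat n n" and part: "A + transpose_mat A = 2 \<cdot>\<^sub>m S"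
    and x: "x \<in> carrier_vec n"
  shows "x \<bullet> (A *\<^sub>v x) = x \<bullet> (S *\<^sub>v x)"
proof -
  have S: "S \<in> carrier_mat n n" by (rule symmetric_part_carrier[OF A part])
  have "x \<bullet> (transpose_mat A *\<^sub>v x) = x \<bullet> (A *\<^sub>v x)"
    using transpose_vec_mult_scalar[OF A x x] A x by (simp add: comm_scalar_prod[of _ n])
  then have "2 * (x \<bullet> (A *\<^sub>v x)) = x \<bullet> ((A + transpose_mat A) *\<^sub>v x)"
    using A x by (simp add: add_mult_distrib_mat_vec[of _ n n] scalar_prod_add_distrib[of _ n])
  also have "\<dots> = 2 * (x \<bullet> (S *\<^sub>v x))"
    unfolding part using S x by (simp add: smult_mat_mult_mat_vec[of _ n n])
  finally show ?thesis by simp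
qed

lemma symmetric_part_congruence:
  fixes A S M :: "real mat"
  assumes M: "M \<in> carrier_mat m n" and A: "A \<in> carrier_mat n n"
    and part: "A + transpose_mat A = 2 \<cdot>\<^sub>m S"
  shows "M * A * transpose_mat M + transpose_mat (M * A * transpose_mat M)
       = 2 \<cdot>\<^sub>m (M * S * transpose_mat M)"
proof -
  have S: "S \<in> carrier_mat n n" by (rule symmetric_part_carrier[OF A part])
  have "transpose_mat (M * A * transpose_mat M) = transpose_mat (transpose_mat M) * transpose_mat (M * A)"
    using M A by (intro transpose_mult[of _ m n]) auto
  also have "\<dots> = M * transpose_mat A * transpose_mat M"
    using transpose_mult[OF M A] M A by simp
  finally have "M * A * transpose_mat M + transpose_mat (M * A * transpose_mat M)
      = M * (A + transpose_mat A) * transpose_mat M"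
    using M A by (simp add: add_mult_distrib_mat[of _ m n] mult_add_distrib_mat[of _ m n])
  also have "\<dots> = 2 \<cdot>\<^sub>m (M * S * transpose_mat M)"
    unfolding part using M S by (simp add: mult_smult_distrib[of _ m n] mult_smult_assoc_mat[of _ m n])
  finally show ?thesis .
qed

lemma symmetric_part_smult:
  fixes A S :: "real mat"
  assumes A: "A \<in> carrier_mat n n" and part: "A + transpose_mat A = 2 \<cdot>\<^sub>m S"
  shows "c \<cdot>\<^sub>m A + transpose_mat (c \<cdot>\<^sub>m A) = 2 \<cdot>\<^sub>m (c \<cdot>\<^sub>m S)"
proof -
  have S: "S \<in> carrier_mat n n" by (rule symmetric_part_carrier[OF A part])
  have "c * A $$ (i, j) + c * A $$ (j, i) = c * (2 * S $$ (i, j))" if "i < n" "j < n" for i j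
    using arg_cong[OF part, of "\<lambda>B. B $$ (i, j)"] A S that by (simp add: distrib_left[symmetric])
  then show ?thesis using A S by (intro eq_matI) auto
qed

lemma symmetric_part_lambda_min_rayleigh:
  fixes A S :: "real mat"
  assumes A: "A \<in> carrier_mat n n" and part: "A + transpose_mat A = 2 \<cdot>\<^sub>m S"
    and x: "x \<in> carrier_vec n"
  shows "lambda_min S * (x \<bullet> x) \<le> x \<bullet> (A *\<^sub>v x)"
  using lambda_min_rayleigh[OF symmetric_part_carrier[OF A part] symmetric_part_transpose[OF A part] x]
  unfolding quadratic_form_symmetric_part[OF A part x] .

section \<open>Phase-transformed impedances\<close>

lemma bdiag_carrier: "bdiag N B \<in> carrier_mat (3 * N) (3 * N)"
  unfolding bdiag_def by simp

lemma bdiag_symmetric_part: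
  assumes A: "\<And>k. k \<in> {1..N} \<Longrightarrow> A k \<in> carrier_mat 3 3"
    and part: "\<And>k. k \<in> {1..N} \<Longrightarrow> A k + transpose_mat (A k) = 2 \<cdot>\<^sub>m S k"
  shows "bdiag N A + transpose_mat (bdiag N A) = 2 \<cdot>\<^sub>m bdiag N S"
proof (rule eq_matI)
  fix i j assume "i < dim_row (2 \<cdot>\<^sub>m bdiag N S)" "j < dim_col (2 \<cdot>\<^sub>m bdiag N S)"
  then have ij: "i < 3 * N" "j < 3 * N" by (simp_all add: bdiag_def)
  show "(bdiag N A + transpose_mat (bdiag N A)) $$ (i, j) = (2 \<cdot>\<^sub>m bdiag N S) $$ (i, j)"
  proof (cases "i div 3 = j div 3")
    case True
    define k where "k = i div 3 + 1"
    have k: "k \<in> {1..N}" using ij unfolding k_def by auto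
    have "(A k + transpose_mat (A k)) $$ (i mod 3, j mod 3) = (2 \<cdot>\<^sub>m S k) $$ (i mod 3, j mod 3)"
      using part[OF k] by simp
    moreover have "S k \<in> carrier_mat 3 3" by (rule symmetric_part_carrier[OF A[OF k] part[OF k]])
    ultimately show ?thesis using True ij A[OF k] unfolding bdiag_def k_def by auto
  qed (use ij in \<open>auto simp: bdiag_def\<close>)
qed (auto simp: bdiag_def)

lemma Re_cnj_alpha_power_mult_alpha_power:
  assumes "i < 3" and "j < 3"
  shows "Re (cnj (alpha ^ i) * alpha ^ j) = (if i = j then 1 else - 1 / 2)"
proof -
  have "cnj (alpha ^ i) * alpha ^ j = cis ((real i - real j) * (2 * pi / 3))"
    unfolding alpha_def DeMoivre cis_cnj cis_mult by (simp add: field_simps)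
  then have Re: "Re (cnj (alpha ^ i) * alpha ^ j) = cos ((real i - real j) * (2 * pi / 3))" by simp
  have "cos (4 * pi / 3) = - 1 / 2"
    using cos_periodic_pi[of "pi / 3"] cos_60 by (simp add: field_simps)
  moreover have "i = 0 \<or> i = 1 \<or> i = 2" "j = 0 \<or> j = 1 \<or> j = 2" using assms by auto
  ultimately show ?thesis unfolding Re using cos_120 by (auto simp: field_simps)
qed

lemma Ztilde_index:
  assumes Z: "Z \<in> carrier_mat 3 3" and "i < 3" and "j < 3"
  shows "Ztilde Z $$ (i, j) = cnj (alpha ^ i) * Z $$ (i, j) * alpha ^ j"
  unfolding Ztilde_def mat_diag_mult_left[OF Z] using assms by (subst mat_diag_mult_right[of _ 3]) auto

lemma Ztilde_carrier: "Z \<in> carrier_mat 3 3 \<Longrightarrow> Ztilde Z \<in> carrier_mat 3 3"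
  unfolding Ztilde_def by (meson mat_diag_dim mult_carrier_mat)

lemma Im_Ztilde_symmetric_part:
  assumes Z: "Z \<in> carrier_mat 3 3" and sym: "transpose_mat Z = Z"
  shows "map_mat Im (Ztilde Z) + transpose_mat (map_mat Im (Ztilde Z)) = 2 \<cdot>\<^sub>m Xtilde Z"
proof (rule eq_matI)
  fix i j assume "i < dim_row (2 \<cdot>\<^sub>m Xtilde Z)" "j < dim_col (2 \<cdot>\<^sub>m Xtilde Z)"
  then have ij: "i < 3" "j < 3" by (simp_all add: Xtilde_def)
  define w where "w = cnj (alpha ^ i) * alpha ^ j"
  have "Z $$ (j, i) = Z $$ (i, j)"
    using Z ij arg_cong[OF sym, of "\<lambda>B. B $$ (i, j)"] by simp
  then have "Ztilde Z $$ (i, j) = w * Z $$ (i, j)" "Ztilde Z $$ (j, i) = cnj w * Z $$ (i, j)"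
    unfolding w_def using Ztilde_index[OF Z] ij by (simp_all add: ac_simps)
  moreover have "Im (w * z) + Im (cnj w * z) = 2 * Re w * Im z" for z by simp
  moreover have "Re w = (if i = j then 1 else - 1 / 2)"
    unfolding w_def by (rule Re_cnj_alpha_power_mult_alpha_power[OF ij])
  ultimately show "(map_mat Im (Ztilde Z) + transpose_mat (map_mat Im (Ztilde Z))) $$ (i, j)
      = (2 \<cdot>\<^sub>m Xtilde Z) $$ (i, j)"
    using ij Ztilde_carrier[OF Z] by (auto simp: Xtilde_def)
qed (use Ztilde_carrier[OF Z] in \<open>simp_all add: Xtilde_def\<close>)

lemma reactance_matrix_symmetric_part:
  assumes M: "M \<in> carrier_mat (3 * N) (3 * N)"
    and Z: "\<And>k. k \<in> {1..N} \<Longrightarrow> Z k \<in> carrier_mat 3 3"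
    and Z_sym: "\<And>k. k \<in> {1..N} \<Longrightarrow> transpose_mat (Z k) = Z k"
  defines "X \<equiv> 2 \<cdot>\<^sub>m (M * bdiag N (\<lambda>k. map_mat Im (Ztilde (Z k))) * transpose_mat M)"
  shows "X + transpose_mat X = 2 \<cdot>\<^sub>m (2 \<cdot>\<^sub>m (M * bdiag N (\<lambda>k. Xtilde (Z k)) * transpose_mat M))"
proof -
  have "bdiag N (\<lambda>k. map_mat Im (Ztilde (Z k))) + transpose_mat (bdiag N (\<lambda>k. map_mat Im (Ztilde (Z k))))
      = 2 \<cdot>\<^sub>m bdiag N (\<lambda>k. Xtilde (Z k))"
    using Z Z_sym by (intro bdiag_symmetric_part Im_Ztilde_symmetric_part) (auto simp: Ztilde_carrier)
  then show ?thesis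
    unfolding X_def using M bdiag_carrier
    by (intro symmetric_part_smult symmetric_part_congruence) auto
qed

section \<open>Gradient iteration for linear least squares\<close>

lemma linear_iteration_sqnorm_decay:
  fixes X :: "real mat" and e :: "nat \<Rightarrow> real vec"
  assumes X: "X \<in> carrier_mat n n" and e0: "e 0 \<in> carrier_vec n"
    and step: "\<And>t. e (Suc t) = e t - \<mu> \<cdot>\<^sub>v (X *\<^sub>v e t)"
    and lower: "\<And>x. x \<in> carrier_vec n \<Longrightarrow> l * (x \<bullet> x) \<le> x \<bullet> (X *\<^sub>v x)"
    and upper: "\<And>x. x \<in> carrier_vec n \<Longrightarrow> (X *\<^sub>v x) \<bullet> (X *\<^sub>v x) \<le> u * (x \<bullet> x)"
    and "0 < \<mu>" and "\<mu> * u < 2 * l"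
  obtains \<rho> where "0 \<le> \<rho>" and "\<rho> < 1" and "\<And>t. e t \<bullet> e t \<le> \<rho> ^ t * (e 0 \<bullet> e 0)"
proof
  have e: "e t \<in> carrier_vec n" for t by (induction t) (use e0 X step in auto)
  define \<rho> where "\<rho> = max (1 - 2 * \<mu> * l + \<mu>\<^sup>2 * u) 0"
  show "0 \<le> \<rho>" unfolding \<rho>_def by simp
  have "0 < \<mu> * (2 * l - \<mu> * u)" using assms(6,7) by simp
  then show "\<rho> < 1" unfolding \<rho>_def by (simp add: algebra_simps power2_eq_square)
  have contraction: "e (Suc t) \<bullet> e (Suc t) \<le> \<rho> * (e t \<bullet> e t)" for t
  proof -
    have "e (Suc t) \<bullet> e (Suc t)
        = e t \<bullet> e t - 2 * \<mu> * (e t \<bullet> (X *\<^sub>v e t)) + \<mu>\<^sup>2 * ((X *\<^sub>v e t) \<bullet> (X *\<^sub>v e t))"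
      unfolding step by (rule sqnorm_minus_smult[OF e mult_mat_vec_carrier[OF X e]])
    also have "\<dots> \<le> e t \<bullet> e t - 2 * \<mu> * (l * (e t \<bullet> e t)) + \<mu>\<^sup>2 * (u * (e t \<bullet> e t))"
      using lower[OF e] upper[OF e] \<open>0 < \<mu>\<close>
      by (intro add_mono diff_mono order_refl mult_left_mono) auto
    also have "\<dots> = (1 - 2 * \<mu> * l + \<mu>\<^sup>2 * u) * (e t \<bullet> e t)" by (simp add: algebra_simps)
    also have "\<dots> \<le> \<rho> * (e t \<bullet> e t)"
      unfolding \<rho>_def by (intro mult_right_mono scalar_prod_self_nonneg) simp
    finally show ?thesis .
  qed
  show "e t \<bullet> e t \<le> \<rho> ^ t * (e 0 \<bullet> e 0)" for t
  proof (induction t)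
    case (Suc t)
    have "e (Suc t) \<bullet> e (Suc t) \<le> \<rho> * (e t \<bullet> e t)" by (rule contraction)
    also have "\<dots> \<le> \<rho> * (\<rho> ^ t * (e 0 \<bullet> e 0))"
      using Suc \<open>0 \<le> \<rho>\<close> by (rule mult_left_mono)
    finally show ?case by (simp add: mult.assoc)
  qed simp
qed

lemma sqnorm_geometric_decay_tendsto_zero:
  fixes e :: "nat \<Rightarrow> real vec"
  assumes e: "\<And>t. e t \<in> carrier_vec n" and "0 \<le> \<rho>" and "\<rho> < 1"
    and decay: "\<And>t. e t \<bullet> e t \<le> \<rho> ^ t * C" and i: "i < n"
  shows "(\<lambda>t. e t $ i) \<longlonglongrightarrow> 0"
proof -
  have lim: "(\<lambda>t. \<rho> ^ t * C) \<longlonglongrightarrow> 0"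
    using assms(2,3) by (intro tendsto_mult_left_zero LIMSEQ_power_zero) auto
  have "(\<lambda>t. (e t $ i)\<^sup>2) \<longlonglongrightarrow> 0"
  proof (rule tendsto_sandwich[OF _ _ tendsto_const lim])
    show "\<forall>\<^sub>F t in sequentially. (e t $ i)\<^sup>2 \<le> \<rho> ^ t * C"
      using vec_index_sq_le_scalar_prod_self[OF e i] decay order_trans by (intro always_eventually) blast
  qed simp
  then have "(\<lambda>t. sqrt ((e t $ i)\<^sup>2)) \<longlonglongrightarrow> sqrt 0" by (rule tendsto_real_sqrt)
  then show ?thesis by (simp add: tendsto_rabs_zero_iff)
qed

definition least_squares_cost :: "real mat \<Rightarrow> real vec \<Rightarrow> real vec \<Rightarrow> real" where
  "least_squares_cost X b x = (1 / 2) * ((b + X *\<^sub>v x) \<bullet> (b + X *\<^sub>v x))"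

lemma least_squares_zero_residual_unique_minimizer:
  fixes X :: "real mat"
  assumes X: "X \<in> carrier_mat n n" and b: "b \<in> carrier_vec n" and qs: "qs \<in> carrier_vec n"
    and residual: "b + X *\<^sub>v qs = 0\<^sub>v n"
    and inj: "\<And>v. v \<in> carrier_vec n \<Longrightarrow> X *\<^sub>v v = 0\<^sub>v n \<Longrightarrow> v = 0\<^sub>v n"
  shows "\<forall>x\<in>carrier_vec n. least_squares_cost X b qs \<le> least_squares_cost X b x"
    and "\<forall>x\<in>carrier_vec n. (\<forall>y\<in>carrier_vec n. least_squares_cost X b x \<le> least_squares_cost X b y)
           \<longrightarrow> x = qs"
proof -
  have cost_qs: "least_squares_cost X b qs = 0"
    unfolding least_squares_cost_def residual by simp
  then show "\<forall>x\<in>carrier_vec n. least_squares_cost X b qs \<le> least_squares_cost X b x"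
    unfolding least_squares_cost_def using scalar_prod_self_nonneg by simp
  show "\<forall>x\<in>carrier_vec n. (\<forall>y\<in>carrier_vec n. least_squares_cost X b x \<le> least_squares_cost X b y)
      \<longrightarrow> x = qs"
  proof (intro ballI impI)
    fix x assume x: "x \<in> carrier_vec n"
      and min: "\<forall>y\<in>carrier_vec n. least_squares_cost X b x \<le> least_squares_cost X b y"
    have "least_squares_cost X b x \<le> 0" using min qs cost_qs by auto
    then have "\<not> 0 < (b + X *\<^sub>v x) \<bullet> (b + X *\<^sub>v x)" unfolding least_squares_cost_def by simp
    moreover have "b + X *\<^sub>v x \<in> carrier_vec n" using X b x by simp
    ultimately have res_x: "b + X *\<^sub>v x = 0\<^sub>v n" using scalar_prod_self_pos by metis
    have "(X *\<^sub>v x) $ i = (X *\<^sub>v qs) $ i" if "i < n" for i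
      using arg_cong[OF res_x, of "\<lambda>v. v $ i"] arg_cong[OF residual, of "\<lambda>v. v $ i"] that X b x qs
      by simp
    then have "X *\<^sub>v (x - qs) = 0\<^sub>v n"
      using X x qs by (intro eq_vecI) (auto simp: mult_minus_distrib_mat_vec[OF X x qs])
    then have "(x - qs) $ i = 0" if "i < n" for i
      using inj[of "x - qs"] x qs that by simp
    then show "x = qs" using x qs by (intro eq_vecI) auto
  qed
qed

lemma least_squares_gradient_descent:
  fixes X :: "real mat" and b :: "real vec" and q :: "nat \<Rightarrow> real vec"
  assumes X: "X \<in> carrier_mat n n" and b: "b \<in> carrier_vec n" and q0: "q 0 \<in> carrier_vec n"
    and iter: "\<And>t. q (Suc t) = q t - \<mu> \<cdot>\<^sub>v (b + X *\<^sub>v q t)"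
    and lower: "\<And>x. x \<in> carrier_vec n \<Longrightarrow> l * (x \<bullet> x) \<le> x \<bullet> (X *\<^sub>v x)"
    and upper: "\<And>x. x \<in> carrier_vec n \<Longrightarrow> (X *\<^sub>v x) \<bullet> (X *\<^sub>v x) \<le> u * (x \<bullet> x)"
    and \<mu>: "0 < \<mu>" "\<mu> * u < 2 * l"
  shows "\<exists>qs. qs \<in> carrier_vec n
     \<and> (\<forall>x\<in>carrier_vec n. least_squares_cost X b qs \<le> least_squares_cost X b x)
     \<and> (\<forall>x\<in>carrier_vec n. (\<forall>y\<in>carrier_vec n. least_squares_cost X b x \<le> least_squares_cost X b y)
          \<longrightarrow> x = qs)
     \<and> (\<forall>i<n. (\<lambda>t. q t $ i) \<longlonglongrightarrow> qs $ i)"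
proof -
  have inj: "v = 0\<^sub>v n" if v: "v \<in> carrier_vec n" "X *\<^sub>v v = 0\<^sub>v n" for v
  proof (rule ccontr)
    assume "v \<noteq> 0\<^sub>v n"
    with v have "0 < v \<bullet> v" by (intro scalar_prod_self_pos)
    moreover have "l * (v \<bullet> v) \<le> 0" and "0 \<le> u * (v \<bullet> v)"
      using lower[OF v(1)] upper[OF v(1)] v by simp_all
    ultimately have "l \<le> 0" and "0 \<le> u" by (simp_all add: mult_le_0_iff zero_le_mult_iff)
    then show False using \<mu> mult_nonneg_nonneg[of \<mu> u] by linarith
  qed
  then have "det X \<noteq> 0" using det_0_iff_vec_prod_zero_field[OF X] by blast
  then obtain C where C: "C \<in> carrier_mat n n" "X * C = 1\<^sub>m n"
    using nonsingular_mat_inverse[OF X] by metis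
  define qs where "qs = C *\<^sub>v (- b)"
  have qs: "qs \<in> carrier_vec n" unfolding qs_def using C b by simp
  have "X *\<^sub>v qs = - b"
    unfolding qs_def using X C b by (simp flip: assoc_mult_mat_vec)
  then have residual: "b + X *\<^sub>v qs = 0\<^sub>v n" using b by simp
  have q: "q t \<in> carrier_vec n" for t by (induction t) (use q0 iter X b in auto)
  define e where "e t = q t - qs" for t
  have e: "e t \<in> carrier_vec n" for t unfolding e_def using q qs by simp
  have e_step: "e (Suc t) = e t - \<mu> \<cdot>\<^sub>v (X *\<^sub>v e t)" for t
  proof -
    have "X *\<^sub>v e t = X *\<^sub>v q t - X *\<^sub>v qs"
      unfolding e_def by (rule mult_minus_distrib_mat_vec[OF X q qs])
    moreover have "b $ i = - (X *\<^sub>v qs) $ i" if "i < n" for i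
      using arg_cong[OF residual, of "\<lambda>v. v $ i"] that X b qs by simp
    ultimately show ?thesis
      unfolding e_def iter using X b q qs by (intro eq_vecI) (auto simp: algebra_simps)
  qed
  obtain \<rho> where \<rho>: "0 \<le> \<rho>" "\<rho> < 1" "\<And>t. e t \<bullet> e t \<le> \<rho> ^ t * (e 0 \<bullet> e 0)"
    using linear_iteration_sqnorm_decay[OF X e[of 0] e_step lower upper \<mu>] by blast
  have "(\<lambda>t. q t $ i) \<longlonglongrightarrow> qs $ i" if i: "i < n" for i
  proof -
    have "(\<lambda>t. e t $ i + qs $ i) \<longlonglongrightarrow> 0 + qs $ i"
      using sqnorm_geometric_decay_tendsto_zero[OF e \<rho> i] by (intro tendsto_add tendsto_const)
    moreover have "e t $ i + qs $ i = q t $ i" for t unfolding e_def using i q qs by simp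
    ultimately show ?thesis by simp
  qed
  then show ?thesis
    using least_squares_zero_residual_unique_minimizer[OF X b qs residual inj] qs by blast
qed

lemma least_squares_gradient_descent_symmetric_part:
  fixes X S :: "real mat" and b :: "real vec" and q :: "nat \<Rightarrow> real vec"
  assumes X: "X \<in> carrier_mat n n" and "0 < n" and part: "X + transpose_mat X = 2 \<cdot>\<^sub>m S"
    and b: "b \<in> carrier_vec n" and q0: "q 0 \<in> carrier_vec n"
    and iter: "\<And>t. q (Suc t) = q t - \<mu> \<cdot>\<^sub>v (b + X *\<^sub>v q t)"
    and "0 < \<mu>" and "\<mu> < 2 * lambda_min S / lambda_max (transpose_mat X * X)"
  shows "\<exists>qs. qs \<in> carrier_vec n
     \<and> (\<forall>x\<in>carrier_vec n. least_squares_cost X b qs \<le> least_squares_cost X b x)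
     \<and> (\<forall>x\<in>carrier_vec n. (\<forall>y\<in>carrier_vec n. least_squares_cost X b x \<le> least_squares_cost X b y)
          \<longrightarrow> x = qs)
     \<and> (\<forall>i<n. (\<lambda>t. q t $ i) \<longlonglongrightarrow> qs $ i)"
proof (rule least_squares_gradient_descent[OF X b q0 iter])
  show "lambda_min S * (x \<bullet> x) \<le> x \<bullet> (X *\<^sub>v x)" if "x \<in> carrier_vec n" for x
    by (rule symmetric_part_lambda_min_rayleigh[OF X part that])
  show "(X *\<^sub>v x) \<bullet> (X *\<^sub>v x) \<le> lambda_max (transpose_mat X * X) * (x \<bullet> x)"
    if "x \<in> carrier_vec n" for x
    by (rule gram_rayleigh_lambda_max[OF X that])
  have "0 \<le> lambda_max (transpose_mat X * X)" by (rule lambda_max_gram_nonneg[OF X \<open>0 < n\<close>])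
  then show "\<mu> * lambda_max (transpose_mat X * X) < 2 * lambda_min S"
    using assms(7,8) by (cases "lambda_max (transpose_mat X * X) = 0") (auto simp: pos_less_divide_eq)
qed (rule \<open>0 < \<mu>\<close>)

theorem proposition5:
  fixes N :: nat and par :: "nat \<Rightarrow> nat" and Z :: "nat \<Rightarrow> complex mat"
    and p :: "real vec" and v0 :: real and \<mu> :: real and q :: "nat \<Rightarrow> real vec"
  assumes tree: "\<forall>n\<in>{1..N}. par n < n"
    and Zdim: "\<forall>n\<in>{1..N}. Z n \<in> carrier_mat 3 3"
    and Zsym: "\<forall>n\<in>{1..N}. transpose_mat (Z n) = Z n"
    and p: "p \<in> carrier_vec (3*N)"
    and q0: "q 0 \<in> carrier_vec (3*N)"
    and iter: "\<forall>t. q (Suc t) = q t - \<mu> \<cdot>\<^sub>v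
        ((2 \<cdot>\<^sub>m (Mmat N par * bdiag N (\<lambda>n. map_mat Re (Ztilde (Z n))) * transpose_mat (Mmat N par))) *\<^sub>v p
         + (2 \<cdot>\<^sub>m (Mmat N par * bdiag N (\<lambda>n. map_mat Im (Ztilde (Z n))) * transpose_mat (Mmat N par))) *\<^sub>v q t
         + vec (3*N) (\<lambda>_. v0) - vec (3*N) (\<lambda>_. v0))"
    and mu_pos: "0 < \<mu>"
    and mu_ub: "\<mu> < 2 * lambda_min (2 \<cdot>\<^sub>m (Mmat N par * bdiag N (\<lambda>n. Xtilde (Z n)) * transpose_mat (Mmat N par)))
        / lambda_max (transpose_mat (2 \<cdot>\<^sub>m (Mmat N par * bdiag N (\<lambda>n. map_mat Im (Ztilde (Z n))) * transpose_mat (Mmat N par)))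
                      * (2 \<cdot>\<^sub>m (Mmat N par * bdiag N (\<lambda>n. map_mat Im (Ztilde (Z n))) * transpose_mat (Mmat N par))))"
  shows "\<exists>qs. qs \<in> carrier_vec (3*N)
     \<and> (let R = 2 \<cdot>\<^sub>m (Mmat N par * bdiag N (\<lambda>n. map_mat Re (Ztilde (Z n))) * transpose_mat (Mmat N par));
            X = 2 \<cdot>\<^sub>m (Mmat N par * bdiag N (\<lambda>n. map_mat Im (Ztilde (Z n))) * transpose_mat (Mmat N par));
            obj = (\<lambda>x. (1/2) * ((R *\<^sub>v p + X *\<^sub>v x) \<bullet> (R *\<^sub>v p + X *\<^sub>v x)))
        in (\<forall>x\<in>carrier_vec (3*N). obj qs \<le> obj x)
         \<and> (\<forall>x\<in>carrier_vec (3*N). (\<forall>y\<in>carrier_vec (3*N). obj x \<le> obj y) \<longrightarrow> x = qs))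
     \<and> (\<forall>i<3*N. (\<lambda>t. q t $ i) \<longlonglongrightarrow> qs $ i)"
  \<comment> \<open>Only the dimensions of \<open>Mmat\<close> matter.\<close>
proof (cases "N = 0")
  case True
  have "x = 0\<^sub>v 0" if "x \<in> carrier_vec (3 * N)" for x :: "real vec" using that True by auto
  then show ?thesis using True by (intro exI[of _ "0\<^sub>v 0"]) (auto simp: Let_def)
next
  case False
  define M where "M = Mmat N par"
  define X where "X = 2 \<cdot>\<^sub>m (M * bdiag N (\<lambda>n. map_mat Im (Ztilde (Z n))) * transpose_mat M)"
  define b where "b = 2 \<cdot>\<^sub>m (M * bdiag N (\<lambda>n. map_mat Re (Ztilde (Z n))) * transpose_mat M) *\<^sub>v p"
  have M: "M \<in> carrier_mat (3 * N) (3 * N)" unfolding M_def Mmat_def Tmat_def carrier_mat_def by simp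
  have sandwich: "2 \<cdot>\<^sub>m (M * bdiag N B * transpose_mat M) \<in> carrier_mat (3 * N) (3 * N)" for B
    using M bdiag_carrier[of N B] by simp
  have X: "X \<in> carrier_mat (3 * N) (3 * N)" unfolding X_def by (rule sandwich)
  have b: "b \<in> carrier_vec (3 * N)" unfolding b_def by (rule mult_mat_vec_carrier[OF sandwich p])
  have part: "X + transpose_mat X = 2 \<cdot>\<^sub>m (2 \<cdot>\<^sub>m (M * bdiag N (\<lambda>n. Xtilde (Z n)) * transpose_mat M))"
    unfolding X_def using Zdim Zsym by (intro reactance_matrix_symmetric_part[OF M]) auto
  have "q (Suc t) = q t - \<mu> \<cdot>\<^sub>v (b + X *\<^sub>v q t)" for t
  proof -
    have "q t \<in> carrier_vec (3 * N)" by (induction t) (use q0 iter X b in \<open>auto simp flip: b_def X_def M_def\<close>)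
    then show ?thesis using iter X b unfolding b_def[symmetric] X_def[symmetric] M_def[symmetric]
      by (auto intro!: arg_cong[of _ _ "\<lambda>v. q t - \<mu> \<cdot>\<^sub>v v"] eq_vecI)
  qed
  from least_squares_gradient_descent_symmetric_part[OF X _ part b q0 this mu_pos] False mu_ub
  show ?thesis unfolding Let_def least_squares_cost_def b_def X_def M_def by simp
qed

end
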